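(* Let $p$ and $m$ be positive integers. The binomial coefficients $\binom{\lambda p+1}{2}$ are divisible by $m$ for all non-negative integers $\lambda$ if and only if either $m$ is odd and $m\mid p$, or $m$ is even and $2m\mid p$. *)

theory Defs
  imports Main
begin

end

theory Submission
  imports Defs
begin

text \<open>Since \<open>2 * ((x + 1) choose 2) = (x + 1) * x\<close>, the condition says that \<open>2 m\<close> divides
  \<open>(l p + 1) l p\<close> for every \<open>l\<close>. Comparing \<open>l = 1\<close> and \<open>l = 2\<close> gives \<open>m dvd p\<^sup>2\<close> and
  \<open>m dvd p\<^sup>2 + p\<close>, hence \<open>m dvd p\<close>. Writing \<open>p = m k\<close>, the case \<open>l = 1\<close> then asks for
  \<open>k (m k + 1)\<close> to be even, which for even \<open>m\<close> forces \<open>k\<close> to be even. Conversely, if \<open>m dvd p\<close>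
  the factor \<open>2\<close> comes for free from the pronic number when \<open>m\<close> is odd, and from \<open>p\<close> itself
  when \<open>m\<close> is even.\<close>

lemma dvd_choose_two_iff_dvd_pronic:
  fixes m x :: nat
  shows "m dvd ((x + 1) choose 2) \<longleftrightarrow> 2 * m dvd (x + 1) * x"
proof -
  have "even ((x + 1) * x)" by simp
  then have "(x + 1) * x = 2 * ((x + 1) choose 2)"
    by (simp add: choose_two)
  then show ?thesis by simp
qed

lemma dvd_of_dvd_pronic_double:
  fixes m p :: nat
  assumes "2 * m dvd (p + 1) * p" and "2 * m dvd (2 * p + 1) * (2 * p)"
  shows "m dvd p"
proof -
  have double: "(2 * p + 1) * (2 * p) = 2 * ((p + 1) * p) + 2 * (p * p)"
    by (simp add: algebra_simps)
  have "2 * m dvd 2 * ((p + 1) * p) + 2 * (p * p)"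
    using assms(2) unfolding double .
  then have "2 * m dvd 2 * (p * p)"
    using dvd_add_right_iff[OF dvd_mult[OF assms(1), of 2]] by blast
  then have square: "m dvd p * p" by simp
  have "m dvd (p + 1) * p"
    using assms(1) by (rule dvd_mult_right)
  then have "m dvd p * p + p"
    by (simp add: algebra_simps)
  with square show ?thesis by (simp add: dvd_add_right_iff)
qed

lemma odd_dvd_imp_double_dvd_pronic:
  fixes m x :: nat
  assumes "odd m" and "m dvd x"
  shows "2 * m dvd (x + 1) * x"
proof -
  have "even ((x + 1) * x)" by simp
  moreover have "m dvd (x + 1) * x" using assms(2) by simp
  moreover have "coprime 2 m" using assms(1) by simp
  ultimately show ?thesis by (simp add: divides_mult)
qed

lemma even_dvd_pronic_imp_double_dvd:
  fixes m x :: nat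
  assumes "even m" and "m dvd x" and "2 * m dvd (x + 1) * x"
  shows "2 * m dvd x"
proof (cases "m = 0")
  case False
  obtain k where x: "x = m * k" using assms(2) ..
  with assms(3) have "2 * m dvd m * (k * (m * k + 1))"
    by (simp add: algebra_simps)
  with False have "even (k * (m * k + 1))"
    by (simp add: mult.commute[of 2])
  with assms(1) have "even k" by simp
  with x show ?thesis by auto
qed (use assms(2) in simp)

theorem proposition13:
  fixes p m :: nat
  assumes "p > 0" and "m > 0"
  shows "(\<forall>l::nat. m dvd ((l * p + 1) choose 2)) \<longleftrightarrow>
         ((odd m \<and> m dvd p) \<or> (even m \<and> 2 * m dvd p))"
proof
  assume "\<forall>l::nat. m dvd ((l * p + 1) choose 2)"
  then have pronic: "2 * m dvd (l * p + 1) * (l * p)" for l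
    by (simp only: dvd_choose_two_iff_dvd_pronic)
  have pronic_p: "2 * m dvd (p + 1) * p"
    using pronic[of 1] by (simp only: mult_1)
  then have "m dvd p"
    using pronic[of 2] by (rule dvd_of_dvd_pronic_double)
  show "(odd m \<and> m dvd p) \<or> (even m \<and> 2 * m dvd p)"
  proof (cases "even m")
    case True
    from True \<open>m dvd p\<close> pronic_p have "2 * m dvd p"
      by (rule even_dvd_pronic_imp_double_dvd)
    with True show ?thesis by blast
  qed (use \<open>m dvd p\<close> in blast)
next
  assume divisor: "(odd m \<and> m dvd p) \<or> (even m \<and> 2 * m dvd p)"
  show "\<forall>l::nat. m dvd ((l * p + 1) choose 2)"
  proof
    fix l
    show "m dvd ((l * p + 1) choose 2)"
      unfolding dvd_choose_two_iff_dvd_pronic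
    proof (cases "even m")
      case True
      with divisor have "2 * m dvd l * p"
        by (simp add: dvd_mult)
      then show "2 * m dvd (l * p + 1) * (l * p)" by (rule dvd_mult)
    next
      case False
      with divisor have "m dvd l * p"
        by (simp add: dvd_mult)
      with False show "2 * m dvd (l * p + 1) * (l * p)"
        by (rule odd_dvd_imp_double_dvd_pronic)
    qed
  qed
qed

end
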